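(* In the free second-type associative algebra $\mathcal{A}s_2\langle X\rangle$, for all elements $a,b,c,d,e$ the identity \[ abcde=abced-bcaed+bcade \] holds.
   Context: An associative algebra is called of the second type if it satisfies the identity $abc-acb-bac+bca+cab-cba=0$ for all $a,b,c$. $\mathcal{A}s_2\langle X\rangle$ denotes the free algebra of this variety on a countable generating set $X$, over a field of characteristic $0$. *)

theory Defs
  imports Main
begin

text \<open>Noncommutative polynomials over a field 'k in countably many variables
  x_0, x_1, ... (indexed by nat): an element is a coefficient function on words
  (nat lists); polynomials are the finitely supported ones.\<close>

type_synonym 'k ncpoly = "nat list \<Rightarrow> 'k"

definition nczero :: "'k::field ncpoly" where
  "nczero = (\<lambda>w. 0)"

definition ncadd :: "'k::field ncpoly \<Rightarrow> 'k ncpoly \<Rightarrow> 'k ncpoly" where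
  "ncadd p q = (\<lambda>w. p w + q w)"

definition ncsub :: "'k::field ncpoly \<Rightarrow> 'k ncpoly \<Rightarrow> 'k ncpoly" where
  "ncsub p q = (\<lambda>w. p w - q w)"

definition ncsmul :: "'k::field \<Rightarrow> 'k ncpoly \<Rightarrow> 'k ncpoly" where
  "ncsmul c p = (\<lambda>w. c * p w)"

definition ncmul :: "'k::field ncpoly \<Rightarrow> 'k ncpoly \<Rightarrow> 'k ncpoly" where
  "ncmul p q = (\<lambda>w. \<Sum>i\<le>length w. p (take i w) * q (drop i w))"

definition ncpoly :: "'k::field ncpoly set" where
  "ncpoly = {p. finite {w. p w \<noteq> 0}}"

text \<open>The free (non-unital) associative algebra As<X>: polynomials without constant term.\<close>
definition free_assoc :: "'k::field ncpoly set" where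
  "free_assoc = {p \<in> ncpoly. p [] = 0}"

definition second_type_poly :: "'k::field ncpoly \<Rightarrow> 'k ncpoly \<Rightarrow> 'k ncpoly \<Rightarrow> 'k ncpoly" where
  "second_type_poly a b c =
     ncadd (ncsub (ncsub (ncmul (ncmul a b) c) (ncmul (ncmul a c) b)) (ncmul (ncmul b a) c))
       (ncsub (ncadd (ncmul (ncmul b c) a) (ncmul (ncmul c a) b)) (ncmul (ncmul c b) a))"

text \<open>The T-ideal of As<X> generated by the second-type identity: the linear span of
  all u * f(a,b,c) * v with a,b,c in As<X> and u, v polynomials (u, v may be constants,
  which yields one-sided multiples and f(a,b,c) itself).\<close>
inductive_set as2_ideal :: "'k::field ncpoly set" where
  zero: "nczero \<in> as2_ideal"
| add: "x \<in> as2_ideal \<Longrightarrow> y \<in> as2_ideal \<Longrightarrow> ncadd x y \<in> as2_ideal"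
| smult: "x \<in> as2_ideal \<Longrightarrow> ncsmul c x \<in> as2_ideal"
| gen: "u \<in> ncpoly \<Longrightarrow> v \<in> ncpoly \<Longrightarrow> a \<in> free_assoc \<Longrightarrow> b \<in> free_assoc \<Longrightarrow>
        c \<in> free_assoc \<Longrightarrow> ncmul (ncmul u (second_type_poly a b c)) v \<in> as2_ideal"

text \<open>As_2<X> = free_assoc / as2_ideal; equality of classes in As_2<X>.\<close>
definition as2_eq :: "'k::field ncpoly \<Rightarrow> 'k ncpoly \<Rightarrow> bool" where
  "as2_eq p q \<longleftrightarrow> ncsub p q \<in> as2_ideal"

end

(* Expanding s_3(xy,z,w) - x s_3(y,z,w) - s_3(x,z,w) y shows that modulo the T-ideal
     x [z,w] y = [z,x][w,y] - [w,x][z,y].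
   Substituting a product for x there makes [p,q] r [s,t] symmetric under p <-> s; with the
   antisymmetry in p, q this forces 2 [p,q] r [s,t] = 0.  Applied to s_3(x,y,z) w and
   w s_3(x,y,z), the same identity shows that commutators commute, and substituting a product
   into that gives x [p,q] K = K [p,x] q for every commutator K.  Comparing this with the first
   identity for x [p,q] K yields 3 K [p,x] q = 0.  So every product of two commutators with one
   more factor vanishes, and
     abcde - abced + bcaed - bcade = [a,bc][d,e] = [a,b] c [d,e] + b [a,c][d,e] = 0.
   Characteristic 0 is needed only to cancel the factors 2 and 3. *)

theory Submission
  imports Defs
begin

section \<open>Commutator calculus modulo the standard identity of degree three\<close>

definition comm :: "'a::ring \<Rightarrow> 'a \<Rightarrow> 'a" where
  "comm x y = x * y - y * x"

definition standard3 :: "'a::ring \<Rightarrow> 'a \<Rightarrow> 'a \<Rightarrow> 'a" where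
  "standard3 a b c = (a * b * c - a * c * b - b * a * c) + (b * c * a + c * a * b - c * b * a)"

lemma comm_antisym: "comm y x = - comm x y"
  by (simp add: comm_def)

lemma comm_mult_right: "comm x (y * z) = comm x y * z + y * comm x z"
  by (simp add: comm_def algebra_simps)

(* N plays the role of the non-unital free algebra, whose elements may be substituted into s_3,
   and J that of the T-ideal generated by s_3. *)
locale standard3_quotient =
  fixes N :: "'a::ring_1 set" and J :: "'a set"
  assumes N_diff: "x \<in> N \<Longrightarrow> y \<in> N \<Longrightarrow> x - y \<in> N"
    and N_mult: "x \<in> N \<Longrightarrow> y \<in> N \<Longrightarrow> x * y \<in> N"
    and J_zero: "0 \<in> J"
    and J_diff: "x \<in> J \<Longrightarrow> y \<in> J \<Longrightarrow> x - y \<in> J"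
    and J_mult_left: "x \<in> J \<Longrightarrow> a * x \<in> J"
    and J_mult_right: "x \<in> J \<Longrightarrow> x * a \<in> J"
    and standard3_in_J: "x \<in> N \<Longrightarrow> y \<in> N \<Longrightarrow> z \<in> N \<Longrightarrow> standard3 x y z \<in> J"
    and J_torsion_free: "0 < n \<Longrightarrow> of_nat n * x \<in> J \<Longrightarrow> x \<in> J"
begin

definition cong :: "'a \<Rightarrow> 'a \<Rightarrow> bool" (infix "\<simeq>" 50) where
  "x \<simeq> y \<longleftrightarrow> x - y \<in> J"

lemma J_uminus: "x \<in> J \<Longrightarrow> - x \<in> J"
  using J_diff[OF J_zero] by fastforce

lemma J_add: "x \<in> J \<Longrightarrow> y \<in> J \<Longrightarrow> x + y \<in> J"
  using J_diff[OF _ J_uminus] by fastforce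

lemma cong_refl [simp]: "x \<simeq> x"
  by (simp add: cong_def J_zero)

lemma cong_sym: "x \<simeq> y \<Longrightarrow> y \<simeq> x"
  unfolding cong_def using J_uminus by fastforce

lemma cong_trans [trans]: "x \<simeq> y \<Longrightarrow> y \<simeq> z \<Longrightarrow> x \<simeq> z"
  unfolding cong_def using J_add by fastforce

lemma cong_add: "x \<simeq> x' \<Longrightarrow> y \<simeq> y' \<Longrightarrow> x + y \<simeq> x' + y'"
  unfolding cong_def using J_add by (fastforce simp: algebra_simps)

lemma cong_diff: "x \<simeq> x' \<Longrightarrow> y \<simeq> y' \<Longrightarrow> x - y \<simeq> x' - y'"
  unfolding cong_def using J_diff by (fastforce simp: algebra_simps)

lemma cong_uminus: "x \<simeq> x' \<Longrightarrow> - x \<simeq> - x'"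
  unfolding cong_def using J_uminus by fastforce

lemma cong_mult_left: "x \<simeq> x' \<Longrightarrow> a * x \<simeq> a * x'"
  unfolding cong_def using J_mult_left by (metis right_diff_distrib)

lemma cong_mult_right: "x \<simeq> x' \<Longrightarrow> x * b \<simeq> x' * b"
  unfolding cong_def using J_mult_right by (metis left_diff_distrib)

lemma cong_by_diff: "x' \<simeq> y' \<Longrightarrow> x - y = x' - y' \<Longrightarrow> x \<simeq> y"
  by (simp add: cong_def)

lemma cong_zero_if_double_cong_zero:
  assumes "x + x \<simeq> 0" shows "x \<simeq> 0"
proof -
  have "of_nat (Suc (Suc 0)) * x = x + x"
    by (simp only: of_nat_Suc of_nat_0 distrib_right mult_1_left mult_zero_left add_0_right)
  then show ?thesis
    using assms J_torsion_free[of "Suc (Suc 0)" x] by (simp add: cong_def)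
qed

lemma cong_zero_if_triple_cong_zero:
  assumes "x + x + x \<simeq> 0" shows "x \<simeq> 0"
proof -
  have "of_nat (Suc (Suc (Suc 0))) * x = x + x + x"
    by (simp only: of_nat_Suc of_nat_0 distrib_right mult_1_left mult_zero_left add_0_right add.assoc)
  then show ?thesis
    using assms J_torsion_free[of "Suc (Suc (Suc 0))" x] by (simp add: cong_def)
qed

lemma cong_zero_if_cong_uminus: "x \<simeq> - x \<Longrightarrow> x \<simeq> 0"
  by (rule cong_zero_if_double_cong_zero) (simp add: cong_def)

lemma standard3_cong: "x \<in> N \<Longrightarrow> y \<in> N \<Longrightarrow> z \<in> N \<Longrightarrow> standard3 x y z \<simeq> 0"
  by (simp add: cong_def standard3_in_J)

lemma comm_N: "x \<in> N \<Longrightarrow> y \<in> N \<Longrightarrow> comm x y \<in> N"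
  by (simp add: comm_def N_diff N_mult)

lemma elem_comm_elem:
  assumes "x \<in> N" "y \<in> N" "z \<in> N" "w \<in> N"
  shows "x * comm z w * y \<simeq> comm z x * comm w y - comm w x * comm z y"
proof -
  have "x * comm z w * y - (comm z x * comm w y - comm w x * comm z y)
      = x * standard3 y z w + standard3 x z w * y - standard3 (x * y) z w"
    by (simp add: comm_def standard3_def algebra_simps)
  then show ?thesis
    unfolding cong_def using assms
    by (simp add: J_add J_diff J_mult_left J_mult_right standard3_in_J N_mult)
qed

lemma comm_elem_comm_swap:
  assumes "p \<in> N" "q \<in> N" "r \<in> N" "s \<in> N" "t \<in> N"
  shows "comm p q * r * comm s t \<simeq> comm s q * r * comm p t"
proof -
  have "q * r * comm p s * t \<simeq> comm p (q * r) * comm s t - comm s (q * r) * comm p t"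
    using assms by (simp add: elem_comm_elem N_mult)
  moreover have "q * r * comm p s * t \<simeq> q * (comm p r * comm s t - comm s r * comm p t)"
    using cong_mult_left[OF elem_comm_elem[of r t p s]] assms by (simp add: mult.assoc)
  ultimately have "comm p (q * r) * comm s t - comm s (q * r) * comm p t
      \<simeq> q * (comm p r * comm s t - comm s r * comm p t)"
    using cong_sym cong_trans by blast
  then show ?thesis
    by (rule cong_by_diff) (simp add: comm_mult_right algebra_simps)
qed

lemma comm_elem_comm:
  assumes "p \<in> N" "q \<in> N" "r \<in> N" "s \<in> N" "t \<in> N"
  shows "comm p q * r * comm s t \<simeq> 0"
proof (rule cong_zero_if_cong_uminus)
  \<comment> \<open>three swaps p <-> s, interleaved with antisymmetry, return with the opposite sign\<close>
  have "comm p q * r * comm s t \<simeq> comm s q * r * comm p t"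
    using assms by (rule comm_elem_comm_swap)
  also have "\<dots> = - (comm q s * r * comm p t)"
    by (simp add: comm_antisym[of s q])
  also have "\<dots> \<simeq> - (comm p s * r * comm q t)"
    using assms by (intro cong_uminus comm_elem_comm_swap)
  also have "\<dots> = comm s p * r * comm q t"
    by (simp add: comm_antisym[of s p])
  also have "\<dots> \<simeq> comm q p * r * comm s t"
    using assms by (intro comm_elem_comm_swap)
  also have "\<dots> = - (comm p q * r * comm s t)"
    by (simp add: comm_antisym[of p q])
  finally show "comm p q * r * comm s t \<simeq> - (comm p q * r * comm s t)" .
qed

lemma comm_comm_cyclic_right:
  assumes "x \<in> N" "y \<in> N" "z \<in> N" "w \<in> N"
  shows "comm x y * comm z w + comm y z * comm x w + comm z x * comm y w \<simeq> 0"
proof (rule cong_zero_if_cong_uminus)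
  have "0 = 0 * w" by simp
  also have "\<dots> \<simeq> standard3 x y z * w"
    using assms by (intro cong_mult_right cong_sym[OF standard3_cong])
  also have "\<dots> = x * comm y z * w + y * comm z x * w + z * comm x y * w"
    by (simp add: standard3_def comm_def algebra_simps)
  also have "\<dots> \<simeq> (comm y x * comm z w - comm z x * comm y w)
      + (comm z y * comm x w - comm x y * comm z w) + (comm x z * comm y w - comm y z * comm x w)"
    using assms by (intro cong_add elem_comm_elem)
  finally show "comm x y * comm z w + comm y z * comm x w + comm z x * comm y w
      \<simeq> - (comm x y * comm z w + comm y z * comm x w + comm z x * comm y w)"
    by (rule cong_by_diff)
      (simp add: comm_antisym[of y x] comm_antisym[of z y] comm_antisym[of x z] algebra_simps)
qed

lemma comm_comm_cyclic_left:
  assumes "x \<in> N" "y \<in> N" "z \<in> N" "w \<in> N"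
  shows "comm x w * comm y z + comm y w * comm z x + comm z w * comm x y \<simeq> 0"
proof (rule cong_zero_if_cong_uminus)
  have "0 = w * 0" by simp
  also have "\<dots> \<simeq> w * standard3 x y z"
    using assms by (intro cong_mult_left cong_sym[OF standard3_cong])
  also have "\<dots> = w * comm x y * z + w * comm y z * x + w * comm z x * y"
    by (simp add: standard3_def comm_def algebra_simps)
  also have "\<dots> \<simeq> (comm x w * comm y z - comm y w * comm x z)
      + (comm y w * comm z x - comm z w * comm y x) + (comm z w * comm x y - comm x w * comm z y)"
    using assms by (intro cong_add elem_comm_elem)
  finally show "comm x w * comm y z + comm y w * comm z x + comm z w * comm x y
      \<simeq> - (comm x w * comm y z + comm y w * comm z x + comm z w * comm x y)"
    by (rule cong_by_diff[OF cong_sym])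
      (simp add: comm_antisym[of x z] comm_antisym[of y x] comm_antisym[of z y] algebra_simps)
qed

lemma comm_comm_commute:
  assumes "a \<in> N" "b \<in> N" "c \<in> N" "d \<in> N"
  shows "comm a b * comm c d \<simeq> comm c d * comm a b"
proof -
  have "(comm c a * comm b d + comm a b * comm c d + comm b c * comm a d)
      + (comm a c * comm b d + comm b c * comm d a + comm d c * comm a b) \<simeq> 0 + 0"
    using assms by (intro cong_add comm_comm_cyclic_right comm_comm_cyclic_left)
  then show ?thesis
    by (rule cong_by_diff)
      (simp add: comm_antisym[of a c] comm_antisym[of d a] comm_antisym[of d c] algebra_simps)
qed

lemma elem_comm_comm_swap:
  assumes "x \<in> N" "p \<in> N" "q \<in> N" "r \<in> N" "s \<in> N"
  shows "x * comm p q * comm r s \<simeq> comm r s * comm p x * q"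
proof -
  have "(comm r s * x * comm p q - comm p x * q * comm r s) - comm r s * comm p (x * q)
      \<simeq> (0 - 0) - comm p (x * q) * comm r s"
    using assms by (intro cong_diff comm_elem_comm comm_comm_commute N_mult)
  then show ?thesis
    by (rule cong_by_diff) (simp add: comm_mult_right algebra_simps)
qed

lemma comm_comm_elem_double:
  assumes "x \<in> N" "p \<in> N" "q \<in> N" "r \<in> N" "s \<in> N"
  shows "comm r s * comm p x * q + comm r s * comm p x * q \<simeq> comm r s * comm q x * p"
proof -
  have K: "comm r s \<in> N"
    using assms by (simp add: comm_N)
  have "comm r s * comm p x * q \<simeq> x * comm p q * comm r s"
    using assms by (rule cong_sym[OF elem_comm_comm_swap])
  also have "\<dots> \<simeq> comm p x * comm q (comm r s) - comm q x * comm p (comm r s)"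
    using assms K by (intro elem_comm_elem)
  also have "\<dots> = (comm p x * q * comm r s - comm q x * p * comm r s)
      - (comm p x * comm r s * q - comm q x * comm r s * p)"
    by (simp add: comm_def algebra_simps)
  also have "\<dots> \<simeq> (0 - 0) - (comm r s * comm p x * q - comm r s * comm q x * p)"
    using assms
    by (intro cong_diff comm_elem_comm cong_mult_right comm_comm_commute comm_N)
  finally show ?thesis
    by (rule cong_by_diff) (simp add: algebra_simps)
qed

lemma comm_comm_elem:
  assumes "x \<in> N" "p \<in> N" "q \<in> N" "r \<in> N" "s \<in> N"
  shows "comm r s * comm p x * q \<simeq> 0"
proof (rule cong_zero_if_triple_cong_zero)
  let ?n = "\<lambda>p q. comm r s * comm p x * q"
  have "?n p q + ?n p q + ?n p q = ((?n p q + ?n p q) + (?n p q + ?n p q)) - ?n p q"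
    by (simp add: algebra_simps)
  also have "\<dots> \<simeq> (?n q p + ?n q p) - ?n p q"
    using assms by (intro cong_diff cong_add comm_comm_elem_double cong_refl)
  also have "\<dots> \<simeq> ?n p q - ?n p q"
    using assms by (intro cong_diff comm_comm_elem_double cong_refl)
  finally show "?n p q + ?n p q + ?n p q \<simeq> 0"
    by simp
qed

lemma elem_comm_comm:
  assumes "x \<in> N" "p \<in> N" "q \<in> N" "r \<in> N" "s \<in> N"
  shows "x * comm p q * comm r s \<simeq> 0"
proof -
  have "x * comm p q * comm r s \<simeq> comm r s * comm p x * q"
    using assms by (rule elem_comm_comm_swap)
  also have "\<dots> \<simeq> 0"
    using assms by (rule comm_comm_elem)
  finally show ?thesis .
qed

lemma comm_prod_comm:
  assumes "a \<in> N" "b \<in> N" "c \<in> N" "d \<in> N" "e \<in> N"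
  shows "comm a (b * c) * comm d e \<simeq> 0"
proof -
  have "comm a b * c * comm d e + b * comm a c * comm d e \<simeq> 0 + 0"
    using assms by (intro cong_add comm_elem_comm elem_comm_comm)
  then show ?thesis
    by (simp add: comm_mult_right algebra_simps)
qed

lemma abcde_identity:
  assumes "a \<in> N" "b \<in> N" "c \<in> N" "d \<in> N" "e \<in> N"
  shows "a * b * c * d * e \<simeq> (a * b * c * e * d - b * c * a * e * d) + b * c * a * d * e"
  using comm_prod_comm[OF assms] by (rule cong_by_diff) (simp add: comm_def algebra_simps)

end

section \<open>The free unital algebra of noncommutative polynomials\<close>

lemma ncmul_assoc: "ncmul (ncmul p q) r = ncmul p (ncmul q r)"
proof (rule ext)
  fix w :: "nat list"
  define n where "n = length w"
  define g where "g i k = p (take i w) * q (take k (drop i w)) * r (drop (i + k) w)" for i k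
  have left: "ncmul (ncmul p q) r w = (\<Sum>j\<le>n. \<Sum>i\<le>j. g i (j - i))"
    unfolding ncmul_def n_def[symmetric]
  proof (rule sum.cong[OF refl])
    fix j assume "j \<in> {..n}"
    then have "j \<le> n" by simp
    then show "(\<Sum>i\<le>length (take j w). p (take i (take j w)) * q (drop i (take j w))) * r (drop j w)
        = (\<Sum>i\<le>j. g i (j - i))"
      by (auto simp: n_def sum_distrib_right min_def g_def take_take drop_take intro!: sum.cong)
  qed
  have right: "ncmul p (ncmul q r) w = (\<Sum>i\<le>n. \<Sum>k\<le>n - i. g i k)"
    unfolding ncmul_def n_def[symmetric]
    by (simp add: n_def sum_distrib_left g_def drop_drop mult.assoc add.commute)
  have "(\<Sum>i\<le>n. \<Sum>k\<le>n - i. g i k) = (\<Sum>(i, k)\<in>Sigma {..n} (\<lambda>i. {..n - i}). g i k)"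
    by (simp add: sum.Sigma)
  also have "Sigma {..n} (\<lambda>i. {..n - i}) = {(i, k). i + k \<le> n}"
    by auto
  also have "(\<Sum>(i, k)\<in>{(i, k). i + k \<le> n}. g i k) = (\<Sum>j\<le>n. \<Sum>i\<le>j. g i (j - i))"
    by (rule sum.triangle_reindex_eq)
  finally show "ncmul (ncmul p q) r w = ncmul p (ncmul q r) w"
    using left right by simp
qed

lemma ncmul_ncadd_left: "ncmul (ncadd p q) r = ncadd (ncmul p r) (ncmul q r)"
  by (rule ext) (simp add: ncmul_def ncadd_def distrib_right sum.distrib)

lemma ncmul_ncadd_right: "ncmul r (ncadd p q) = ncadd (ncmul r p) (ncmul r q)"
  by (rule ext) (simp add: ncmul_def ncadd_def distrib_left sum.distrib)

lemma ncmul_ncsmul_left: "ncmul (ncsmul c p) q = ncsmul c (ncmul p q)"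
  by (rule ext) (simp add: ncmul_def ncsmul_def sum_distrib_left mult.assoc)

lemma ncmul_ncsmul_right: "ncmul p (ncsmul c q) = ncsmul c (ncmul p q)"
  by (rule ext) (simp add: ncmul_def ncsmul_def sum_distrib_left algebra_simps)

lemma ncmul_nczero_right: "ncmul p nczero = nczero"
  by (rule ext) (simp add: ncmul_def nczero_def)

definition ncone :: "'k::field ncpoly" where
  "ncone = (\<lambda>w. if w = [] then 1 else 0)"

lemma ncmul_ncone_left: "ncmul ncone p = p"
proof (rule ext)
  fix w :: "nat list"
  show "ncmul ncone p w = p w"
    by (cases w) (simp_all add: ncmul_def ncone_def sum.atMost_shift del: sum.atMost_Suc)
qed

lemma ncmul_ncone_right: "ncmul p ncone = p"
proof (rule ext)
  fix w :: "nat list"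
  have "ncmul p ncone w = (\<Sum>i<length w. p (take i w) * ncone (drop i w)) + p w"
    unfolding ncmul_def by (simp add: lessThan_Suc_atMost[symmetric] ncone_def)
  also have "(\<Sum>i<length w. p (take i w) * ncone (drop i w)) = 0"
    by (rule sum.neutral) (simp add: ncone_def)
  finally show "ncmul p ncone w = p w"
    by simp
qed

lemma nczero_ncpoly: "nczero \<in> ncpoly"
  by (simp add: ncpoly_def nczero_def)

lemma ncone_ncpoly: "ncone \<in> ncpoly"
  unfolding ncpoly_def by (auto intro: finite_subset[of _ "{[]}"] simp: ncone_def)

lemma ncadd_ncpoly: "p \<in> ncpoly \<Longrightarrow> q \<in> ncpoly \<Longrightarrow> ncadd p q \<in> ncpoly"
  unfolding ncpoly_def ncadd_def
  by (auto intro: finite_subset[of _ "{w. p w \<noteq> 0} \<union> {w. q w \<noteq> 0}"])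

lemma ncsub_ncpoly: "p \<in> ncpoly \<Longrightarrow> q \<in> ncpoly \<Longrightarrow> ncsub p q \<in> ncpoly"
  unfolding ncpoly_def ncsub_def
  by (auto intro: finite_subset[of _ "{w. p w \<noteq> 0} \<union> {w. q w \<noteq> 0}"])

lemma ncsmul_ncpoly: "p \<in> ncpoly \<Longrightarrow> ncsmul c p \<in> ncpoly"
  unfolding ncpoly_def ncsmul_def
  by (auto intro: finite_subset[of _ "{w. p w \<noteq> 0}"])

lemma ncmul_ncpoly:
  assumes "p \<in> ncpoly" "q \<in> ncpoly"
  shows "ncmul p q \<in> ncpoly"
proof -
  let ?P = "{w. p w \<noteq> 0}" and ?Q = "{w. q w \<noteq> 0}"
  have "{w. ncmul p q w \<noteq> 0} \<subseteq> (\<lambda>(u, v). u @ v) ` (?P \<times> ?Q)"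
  proof
    fix w assume "w \<in> {w. ncmul p q w \<noteq> 0}"
    then obtain i where "p (take i w) * q (drop i w) \<noteq> 0"
      unfolding ncmul_def by (auto elim: sum.not_neutral_contains_not_neutral)
    then have "(take i w, drop i w) \<in> ?P \<times> ?Q"
      by auto
    then show "w \<in> (\<lambda>(u, v). u @ v) ` (?P \<times> ?Q)"
      by (metis (no_types, lifting) append_take_drop_id case_prod_conv image_eqI)
  qed
  moreover have "finite ((\<lambda>(u, v). u @ v) ` (?P \<times> ?Q))"
    using assms by (simp add: ncpoly_def)
  ultimately show ?thesis
    unfolding ncpoly_def by (auto intro: finite_subset)
qed

lemma ncsub_free_assoc: "p \<in> free_assoc \<Longrightarrow> q \<in> free_assoc \<Longrightarrow> ncsub p q \<in> free_assoc"
  by (simp add: free_assoc_def ncsub_ncpoly) (simp add: ncsub_def)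

lemma ncmul_free_assoc: "p \<in> free_assoc \<Longrightarrow> q \<in> free_assoc \<Longrightarrow> ncmul p q \<in> free_assoc"
  by (simp add: free_assoc_def ncmul_ncpoly) (simp add: ncmul_def)

(* Only finitely supported coefficient functions: the generators of as2_ideal admit polynomial
   multipliers only, so as2_ideal is an ideal of this ring but not of all functions. *)
typedef (overloaded) 'k ncalg = "ncpoly :: 'k::field ncpoly set"
  morphisms ncpoly_of ncalg_of
  using nczero_ncpoly by blast

setup_lifting type_definition_ncalg

instantiation ncalg :: (field) ring_1
begin

lift_definition zero_ncalg :: "'a ncalg" is nczero
  by (rule nczero_ncpoly)

lift_definition one_ncalg :: "'a ncalg" is ncone
  by (rule ncone_ncpoly)

lift_definition plus_ncalg :: "'a ncalg \<Rightarrow> 'a ncalg \<Rightarrow> 'a ncalg" is ncadd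
  by (rule ncadd_ncpoly)

lift_definition minus_ncalg :: "'a ncalg \<Rightarrow> 'a ncalg \<Rightarrow> 'a ncalg" is ncsub
  by (rule ncsub_ncpoly)

lift_definition uminus_ncalg :: "'a ncalg \<Rightarrow> 'a ncalg" is "ncsmul (- 1)"
  by (rule ncsmul_ncpoly)

lift_definition times_ncalg :: "'a ncalg \<Rightarrow> 'a ncalg \<Rightarrow> 'a ncalg" is ncmul
  by (rule ncmul_ncpoly)

instance
proof
  fix a b c :: "'a ncalg"
  show "a * b * c = a * (b * c)"
    by transfer (rule ncmul_assoc)
  show "(a + b) * c = a * c + b * c"
    by transfer (rule ncmul_ncadd_left)
  show "a * (b + c) = a * b + a * c"
    by transfer (rule ncmul_ncadd_right)
  show "1 * a = a"
    by transfer (rule ncmul_ncone_left)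
  show "a * 1 = a"
    by transfer (rule ncmul_ncone_right)
  show "a + b + c = a + (b + c)"
    by transfer (simp add: ncadd_def add.assoc)
  show "a + b = b + a"
    by transfer (simp add: ncadd_def add.commute)
  show "0 + a = a"
    by transfer (simp add: ncadd_def nczero_def)
  show "- a + a = 0"
    by transfer (simp add: ncadd_def ncsmul_def nczero_def)
  show "a - b = a + - b"
    by transfer (simp add: ncadd_def ncsub_def ncsmul_def)
  show "(0 :: 'a ncalg) \<noteq> 1"
    by transfer (simp add: nczero_def ncone_def fun_eq_iff)
qed

end

lemma ncpoly_of_of_nat_mult: "ncpoly_of (of_nat n * x) = ncsmul (of_nat n) (ncpoly_of x)"
proof (induction n)
  case 0
  then show ?case
    by (simp add: zero_ncalg.rep_eq ncsmul_def nczero_def)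
next
  case (Suc n)
  have "of_nat (Suc n) * x = x + of_nat n * x"
    by (simp add: distrib_right)
  then show ?case
    using Suc by (simp add: plus_ncalg.rep_eq ncadd_def ncsmul_def fun_eq_iff distrib_right)
qed

lemma as2_ideal_ncsub:
  assumes "x \<in> as2_ideal" "y \<in> as2_ideal"
  shows "ncsub x y \<in> as2_ideal"
proof -
  have "ncadd x (ncsmul (- 1) y) \<in> as2_ideal"
    using assms by (intro as2_ideal.add as2_ideal.smult)
  moreover have "ncadd x (ncsmul (- 1) y) = ncsub x y"
    by (simp add: ncadd_def ncsmul_def ncsub_def fun_eq_iff)
  ultimately show ?thesis
    by simp
qed

lemma as2_ideal_ncmul_left: "x \<in> as2_ideal \<Longrightarrow> u \<in> ncpoly \<Longrightarrow> ncmul u x \<in> as2_ideal"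
proof (induction rule: as2_ideal.induct)
  case zero
  then show ?case
    using as2_ideal.zero by (simp add: ncmul_nczero_right)
next
  case (add x y)
  then show ?case
    by (simp add: ncmul_ncadd_right as2_ideal.add)
next
  case (smult x c)
  then show ?case
    by (simp add: ncmul_ncsmul_right as2_ideal.smult)
next
  case (gen v v' a b c)
  then show ?case
    using as2_ideal.gen[of "ncmul u v" v'] by (simp add: ncmul_assoc ncmul_ncpoly)
qed

lemma as2_ideal_ncmul_right: "x \<in> as2_ideal \<Longrightarrow> u \<in> ncpoly \<Longrightarrow> ncmul x u \<in> as2_ideal"
proof (induction rule: as2_ideal.induct)
  case zero
  then show ?case
    using as2_ideal.zero by (simp add: ncmul_def nczero_def)
next
  case (add x y)
  then show ?case
    by (simp add: ncmul_ncadd_left as2_ideal.add)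
next
  case (smult x c)
  then show ?case
    by (simp add: ncmul_ncsmul_left as2_ideal.smult)
next
  case (gen v v' a b c)
  then show ?case
    using as2_ideal.gen[of v "ncmul v' u"] by (simp add: ncmul_assoc ncmul_ncpoly)
qed

lemma second_type_poly_in_as2_ideal:
  assumes "a \<in> free_assoc" "b \<in> free_assoc" "c \<in> free_assoc"
  shows "second_type_poly a b c \<in> as2_ideal"
  using as2_ideal.gen[OF ncone_ncpoly ncone_ncpoly assms]
  by (simp add: ncmul_ncone_left ncmul_ncone_right)

interpretation ncalg: standard3_quotient
  "{x :: 'k::field_char_0 ncalg. ncpoly_of x \<in> free_assoc}" "{x. ncpoly_of x \<in> as2_ideal}"
proof (unfold_locales; unfold mem_Collect_eq)
  fix x y :: "'k ncalg" and n :: nat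
  show "ncpoly_of x \<in> free_assoc \<Longrightarrow> ncpoly_of y \<in> free_assoc \<Longrightarrow> ncpoly_of (x - y) \<in> free_assoc"
    by (simp add: minus_ncalg.rep_eq ncsub_free_assoc)
  show "ncpoly_of x \<in> free_assoc \<Longrightarrow> ncpoly_of y \<in> free_assoc \<Longrightarrow> ncpoly_of (x * y) \<in> free_assoc"
    by (simp add: times_ncalg.rep_eq ncmul_free_assoc)
  show "ncpoly_of (0 :: 'k ncalg) \<in> as2_ideal"
    by (simp add: zero_ncalg.rep_eq as2_ideal.zero)
  show "ncpoly_of x \<in> as2_ideal \<Longrightarrow> ncpoly_of y \<in> as2_ideal \<Longrightarrow> ncpoly_of (x - y) \<in> as2_ideal"
    by (simp add: minus_ncalg.rep_eq as2_ideal_ncsub)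
  show "ncpoly_of x \<in> as2_ideal \<Longrightarrow> ncpoly_of (y * x) \<in> as2_ideal"
    using ncpoly_of[of y] by (simp add: times_ncalg.rep_eq as2_ideal_ncmul_left)
  show "ncpoly_of x \<in> as2_ideal \<Longrightarrow> ncpoly_of (x * y) \<in> as2_ideal"
    using ncpoly_of[of y] by (simp add: times_ncalg.rep_eq as2_ideal_ncmul_right)
  show "ncpoly_of x \<in> as2_ideal" if "0 < n" "ncpoly_of (of_nat n * x) \<in> as2_ideal"
  proof -
    have "ncsmul (inverse (of_nat n)) (ncsmul (of_nat n) (ncpoly_of x)) \<in> as2_ideal"
      using that by (simp add: ncpoly_of_of_nat_mult as2_ideal.smult)
    moreover have "ncsmul (inverse (of_nat n)) (ncsmul (of_nat n) (ncpoly_of x)) = ncpoly_of x"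
      using that by (simp add: ncsmul_def mult.assoc[symmetric])
    ultimately show ?thesis
      by simp
  qed
  fix x y z :: "'k ncalg"
  assume "ncpoly_of x \<in> free_assoc" "ncpoly_of y \<in> free_assoc" "ncpoly_of z \<in> free_assoc"
  then show "ncpoly_of (standard3 x y z) \<in> as2_ideal"
    using second_type_poly_in_as2_ideal
    by (simp add: standard3_def second_type_poly_def plus_ncalg.rep_eq minus_ncalg.rep_eq times_ncalg.rep_eq)
qed

theorem mainTheorem2:
  fixes a b c d e :: "'k::field_char_0 ncpoly"
  assumes "a \<in> free_assoc" "b \<in> free_assoc" "c \<in> free_assoc"
    "d \<in> free_assoc" "e \<in> free_assoc"
  shows "as2_eq (ncmul (ncmul (ncmul (ncmul a b) c) d) e)
           (ncadd (ncsub (ncmul (ncmul (ncmul (ncmul a b) c) e) d)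
                         (ncmul (ncmul (ncmul (ncmul b c) a) e) d))
                  (ncmul (ncmul (ncmul (ncmul b c) a) d) e))"
proof -
  have embed: "ncpoly_of (ncalg_of p) = p" if "p \<in> free_assoc" for p :: "'k ncpoly"
    using that by (simp add: free_assoc_def ncalg_of_inverse)
  let ?A = "ncalg_of a" and ?B = "ncalg_of b" and ?C = "ncalg_of c"
    and ?D = "ncalg_of d" and ?E = "ncalg_of e"
  have "ncalg.cong (?A * ?B * ?C * ?D * ?E)
      ((?A * ?B * ?C * ?E * ?D - ?B * ?C * ?A * ?E * ?D) + ?B * ?C * ?A * ?D * ?E)"
    using assms by (intro ncalg.abcde_identity) (simp_all add: embed)
  then show ?thesis
    using assms
    by (simp add: ncalg.cong_def as2_eq_def embed
        plus_ncalg.rep_eq minus_ncalg.rep_eq times_ncalg.rep_eq)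
qed

end
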